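(* Let $G$ be a finite group with $|G'|=2$. (1) $\mathcal B(G)$ is seminormal. (2) $\mathcal C(\mathcal B(G),\mathcal F(G))$ is a Clifford semigroup. In particular, if $S\in\mathcal F(G)$ with $\pi(S)=\{g\}$ and $n=\mathrm{ord}(g)$, then $\{[S],[S^{[2]}],\ldots,[S^{[n]}]\}$ is a cyclic subgroup of $\mathcal C(\mathcal B(G),\mathcal F(G))$ of order $n$ generated by $[S]$. (3) $|\mathcal C(\mathcal B(G),\mathcal F(G))|\le|\mathsf Z(G)|+\prod_{g\in G\setminus\mathsf Z(G)}\mathrm{ord}(g)$.
   Context: Let $G$ be a finite group written multiplicatively with identity $1_G$; $G'$ is its commutator subgroup and $\mathsf Z(G)$ its center. $\mathcal F(G)$ is the free abelian monoid with basis $G$ (sequences $S=g_1\boldsymbol{\cdot}\ldots\boldsymbol{\cdot}g_\ell$, operation $\boldsymbol{\cdot}$ = concatenation, $S^{[k]}$ the $k$-fold product of $S$ with itself). $\pi(S)=\{g_{\tau(1)}\cdots g_{\tau(\ell)}:\tau\text{ a permutation of }[1,\ell]\}$, $\pi$ of the empty sequence is $\{1_G\}$, and $\mathcal B(G)=\{S\in\mathcal F(G):1_G\in\pi(S)\}$. For $S,S'\in\mathcal F(G)$, $S\sim S'$ means: for all $T\in\mathcal F(G)$, $S\boldsymbol{\cdot}T\in\mathcal B(G)\iff S'\boldsymbol{\cdot}T\in\mathcal B(G)$; this is a congruence, $[S]$ is the class of $S$, and $\mathcal C(\mathcal B(G),\mathcal F(G))$ is the set of classes, an additively written commutative semigroup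 with $[S]+[T]=[S\boldsymbol{\cdot}T]$. A monoid $H$ with quotient group $\mathsf q(H)$ is seminormal if $x\in\mathsf q(H)$ and $x^2,x^3\in H$ imply $x\in H$. A commutative semigroup is a Clifford semigroup if every element lies in some subgroup of it. *)

theory Defs
  imports "HOL-Algebra.Algebra" "HOL-Library.Multiset"
begin

definition seqs :: "('a, 'b) monoid_scheme \<Rightarrow> 'a multiset set" where
  "seqs G = {S. set_mset S \<subseteq> carrier G}"

definition seq_prods :: "('a, 'b) monoid_scheme \<Rightarrow> 'a multiset \<Rightarrow> 'a set" where
  "seq_prods G S = {foldr (\<lambda>x y. x \<otimes>\<^bsub>G\<^esub> y) xs \<one>\<^bsub>G\<^esub> | xs. mset xs = S}"

definition prod_one_seqs :: "('a, 'b) monoid_scheme \<Rightarrow> 'a multiset set" where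
  "prod_one_seqs G = {S \<in> seqs G. \<one>\<^bsub>G\<^esub> \<in> seq_prods G S}"

definition seq_equiv :: "('a, 'b) monoid_scheme \<Rightarrow> 'a multiset \<Rightarrow> 'a multiset \<Rightarrow> bool" where
  "seq_equiv G S S' \<longleftrightarrow>
     (\<forall>T \<in> seqs G. (S + T \<in> prod_one_seqs G \<longleftrightarrow> S' + T \<in> prod_one_seqs G))"

definition seq_class :: "('a, 'b) monoid_scheme \<Rightarrow> 'a multiset \<Rightarrow> 'a multiset set" where
  "seq_class G S = {S' \<in> seqs G. seq_equiv G S S'}"

definition class_semigroup :: "('a, 'b) monoid_scheme \<Rightarrow> 'a multiset set set" where
  "class_semigroup G = seq_class G ` seqs G"

definition class_add :: "('a, 'b) monoid_scheme \<Rightarrow> 'a multiset set \<Rightarrow> 'a multiset set \<Rightarrow> 'a multiset set" where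
  "class_add G U V = seq_class G ((SOME A. A \<in> U) + (SOME B. B \<in> V))"

text \<open>A submonoid H of the free abelian monoid, embedded in the free abelian group Z^(a);
  its quotient group q(H) is the group of differences a - b with a, b in H.\<close>
definition zvec :: "'a multiset \<Rightarrow> 'a \<Rightarrow> int" where
  "zvec S = (\<lambda>g. int (count S g))"

definition quot_group :: "'a multiset set \<Rightarrow> ('a \<Rightarrow> int) set" where
  "quot_group H = {(\<lambda>g. zvec a g - zvec b g) | a b. a \<in> H \<and> b \<in> H}"

text \<open>Seminormality (written additively: x^k corresponds to k*x).\<close>
definition seminormal :: "'a multiset set \<Rightarrow> bool" where
  "seminormal H \<longleftrightarrow>
     (\<forall>x \<in> quot_group H.
        (\<exists>S \<in> H. zvec S = (\<lambda>g. 2 * x g)) \<and> (\<exists>S \<in> H. zvec S = (\<lambda>g. 3 * x g))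
        \<longrightarrow> (\<exists>S \<in> H. zvec S = x))"

definition semigroup_subgroup :: "'c set \<Rightarrow> ('c \<Rightarrow> 'c \<Rightarrow> 'c) \<Rightarrow> 'c set \<Rightarrow> bool" where
  "semigroup_subgroup C f K \<longleftrightarrow>
     K \<subseteq> C \<and> (\<exists>e. group \<lparr>carrier = K, monoid.mult = f, one = e\<rparr>)"

definition clifford_semigroup :: "'c set \<Rightarrow> ('c \<Rightarrow> 'c \<Rightarrow> 'c) \<Rightarrow> bool" where
  "clifford_semigroup C f \<longleftrightarrow> (\<forall>x \<in> C. \<exists>K. semigroup_subgroup C f K \<and> x \<in> K)"

definition group_center :: "('a, 'b) monoid_scheme \<Rightarrow> 'a set" where
  "group_center G = {z \<in> carrier G. \<forall>g \<in> carrier G. z \<otimes>\<^bsub>G\<^esub> g = g \<otimes>\<^bsub>G\<^esub> z}"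

end

theory Submission
  imports Defs
begin

text \<open>
  Write G' = {1, \<epsilon>}. Then \<epsilon> is central and any two elements commute up to \<epsilon>: ab = ba or
  ab = \<epsilon>ba. Hence the product set \<pi>(S) is a singleton {x} if the terms of S commute pairwise and
  {x, \<epsilon>x} otherwise, so whether S T is a product-one sequence depends only on a product of S,
  a product of T and on whether supp S \<union> supp T is commutative. Thus [S] is determined by \<pi>(S)
  together with, for commutative supports, the noncentral part of supp S.

  Seminormality follows because a product y of S with y^2, y^3 \<in> {1, \<epsilon>} lies in {1, \<epsilon>}. For
  g \<in> \<pi>(S) and k \<ge> 1 the sequences S^[k] and S^[k + ord g] have the same support and the common
  product g^k, so the classes of the powers of S form a cyclic group. For the bound, a
  commutative support containing a noncentral n lies in the centralizer of n, a proper subgroup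
  containing Z(G) \<union> {n, \<epsilon>n}; counting the possible invariants gives at most
  |Z(G)| + 2^|G - Z(G)| classes, and every noncentral element has order at least 2.
\<close>

section \<open>Products of sequences\<close>

definition list_prod :: "('a, 'b) monoid_scheme \<Rightarrow> 'a list \<Rightarrow> 'a" where
  "list_prod G xs = foldr (\<lambda>x y. x \<otimes>\<^bsub>G\<^esub> y) xs \<one>\<^bsub>G\<^esub>"

definition commuting_set :: "('a, 'b) monoid_scheme \<Rightarrow> 'a set \<Rightarrow> bool" where
  "commuting_set G A \<longleftrightarrow> (\<forall>a\<in>A. \<forall>b\<in>A. a \<otimes>\<^bsub>G\<^esub> b = b \<otimes>\<^bsub>G\<^esub> a)"

definition centralizer :: "('a, 'b) monoid_scheme \<Rightarrow> 'a \<Rightarrow> 'a set" where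
  "centralizer G a = {x \<in> carrier G. x \<otimes>\<^bsub>G\<^esub> a = a \<otimes>\<^bsub>G\<^esub> x}"

lemma seq_prods_eq: "seq_prods G S = {list_prod G xs | xs. mset xs = S}"
  by (simp add: seq_prods_def list_prod_def)

lemma seq_prods_nonempty:
  obtains x where "x \<in> seq_prods G S"
  unfolding seq_prods_def using ex_mset by blast

lemma set_mset_repeat_mset: "set_mset (repeat_mset k S) = (if k = 0 then {} else set_mset S)"
  by (auto simp flip: count_greater_zero_iff)

lemma seqs_add: "S \<in> seqs G \<Longrightarrow> T \<in> seqs G \<Longrightarrow> S + T \<in> seqs G"
  by (auto simp: seqs_def)

lemma repeat_mset_in_seqs: "S \<in> seqs G \<Longrightarrow> repeat_mset k S \<in> seqs G"
  by (auto simp: seqs_def set_mset_repeat_mset)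

context monoid
begin

lemma list_prod_Nil [simp]: "list_prod G [] = \<one>"
  by (simp add: list_prod_def)

lemma list_prod_Cons [simp]: "list_prod G (x # xs) = x \<otimes> list_prod G xs"
  by (simp add: list_prod_def)

lemma list_prod_closed [simp]: "set xs \<subseteq> carrier G \<Longrightarrow> list_prod G xs \<in> carrier G"
  by (induction xs) auto

lemma list_prod_append:
  "set xs \<subseteq> carrier G \<Longrightarrow> set ys \<subseteq> carrier G \<Longrightarrow>
    list_prod G (xs @ ys) = list_prod G xs \<otimes> list_prod G ys"
  by (induction xs) (auto simp: m_assoc)

lemma seq_prods_closed: "set_mset S \<subseteq> carrier G \<Longrightarrow> seq_prods G S \<subseteq> carrier G"
  by (auto simp: seq_prods_eq)

lemma seq_prods_add:
  assumes "set_mset S \<subseteq> carrier G" "set_mset T \<subseteq> carrier G"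
    and "x \<in> seq_prods G S" "y \<in> seq_prods G T"
  shows "x \<otimes> y \<in> seq_prods G (S + T)"
proof -
  obtain xs ys where "mset xs = S" "mset ys = T" "x = list_prod G xs" "y = list_prod G ys"
    using assms(3,4) by (auto simp: seq_prods_eq)
  with assms(1,2) show ?thesis
    by (auto simp: seq_prods_eq list_prod_append intro!: exI[of _ "xs @ ys"])
qed

lemma pow_in_seq_prods_repeat:
  assumes "set_mset S \<subseteq> carrier G" "g \<in> seq_prods G S"
  shows "g [^] k \<in> seq_prods G (repeat_mset k S)"
proof (induction k)
  case 0
  have "list_prod G [] \<in> seq_prods G {#}"
    by (auto simp: seq_prods_eq)
  then show ?case by simp
next
  case (Suc k)
  have g: "g \<in> carrier G"
    using assms seq_prods_closed by blast
  have "g \<otimes> g [^] k \<in> seq_prods G (S + repeat_mset k S)"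
    using seq_prods_add[OF _ _ assms(2) Suc] assms(1) by (auto simp: set_mset_repeat_mset)
  then show ?case
    by (simp only: repeat_mset_Suc nat_pow_Suc2[OF g])
qed

end

context group
begin

lemma subgroup_centralizer:
  assumes "a \<in> carrier G"
  shows "subgroup (centralizer G a) G"
proof (rule subgroupI)
  fix x assume "x \<in> centralizer G a"
  then have x: "x \<in> carrier G" "x \<otimes> a = a \<otimes> x"
    by (auto simp: centralizer_def)
  have "inv x \<otimes> a = inv x \<otimes> (a \<otimes> x) \<otimes> inv x"
    using x assms by (simp add: m_assoc)
  also have "\<dots> = inv x \<otimes> (x \<otimes> a) \<otimes> inv x"
    by (simp only: x(2))
  also have "\<dots> = a \<otimes> inv x"
    using x(1) assms by (simp add: m_assoc[symmetric])
  finally show "inv x \<in> centralizer G a"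
    using x by (simp add: centralizer_def)
next
  fix x y assume "x \<in> centralizer G a" "y \<in> centralizer G a"
  then show "x \<otimes> y \<in> centralizer G a"
    using assms by (auto simp: centralizer_def m_assoc) (metis m_assoc)
qed (use assms in \<open>auto simp: centralizer_def\<close>)

lemma subgroup_group_center: "subgroup (group_center G) G"
proof -
  have mem: "z \<in> group_center G \<longleftrightarrow> z \<in> carrier G \<and> (\<forall>g \<in> carrier G. z \<in> centralizer G g)" for z
    by (auto simp: group_center_def centralizer_def)
  have "\<one> \<in> group_center G"
    by (simp add: mem centralizer_def)
  show ?thesis
  proof (rule subgroupI)
    show "group_center G \<subseteq> carrier G"
      by (auto simp: group_center_def)
    show "group_center G \<noteq> {}"
      using \<open>\<one> \<in> group_center G\<close> by blast
  next
    fix x assume "x \<in> group_center G"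
    then show "inv x \<in> group_center G"
      by (auto simp: mem intro: subgroup.m_inv_closed[OF subgroup_centralizer])
  next
    fix x y assume "x \<in> group_center G" "y \<in> group_center G"
    then show "x \<otimes> y \<in> group_center G"
      by (auto simp: mem intro: subgroup.m_closed[OF subgroup_centralizer])
  qed
qed

lemma group_center_subset_centralizer:
  "a \<in> carrier G \<Longrightarrow> group_center G \<subseteq> centralizer G a"
  by (auto simp: group_center_def centralizer_def)

lemma list_prod_in_subgroup:
  "subgroup H G \<Longrightarrow> set xs \<subseteq> H \<Longrightarrow> list_prod G xs \<in> H"
  by (induction xs) (auto simp: subgroup.one_closed subgroup.m_closed)

lemma card_proper_subgroup:
  assumes "finite (carrier G)" "subgroup H G" "H \<noteq> carrier G"
  shows "2 * card H \<le> card (carrier G)"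
proof -
  have less: "card H < card (carrier G)"
    using assms(1,3) subgroup.subset[OF assms(2)] by (intro psubset_card_mono) auto
  have index: "card (rcosets H) * card H = card (carrier G)"
    using lagrange[OF assms(2)] by (simp add: order_def)
  have "2 \<le> card (rcosets H)"
  proof (rule ccontr)
    assume "\<not> 2 \<le> card (rcosets H)"
    then have "card (rcosets H) * card H \<le> 1 * card H"
      by (intro mult_le_mono1) simp
    then show False
      using less index by simp
  qed
  then have "2 * card H \<le> card (rcosets H) * card H"
    by (rule mult_le_mono1)
  then show ?thesis
    using index by simp
qed

lemma two_pow_card_le_prod_ord:
  assumes "finite (carrier G)" "A \<subseteq> carrier G - {\<one>}"
  shows "2 ^ card A \<le> (\<Prod>a\<in>A. ord a)"
proof -
  have "2 \<le> ord a" if "a \<in> A" for a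
  proof -
    have "a \<in> carrier G" "a \<noteq> \<one>"
      using that assms(2) by auto
    then have "1 \<le> ord a" "ord a \<noteq> 1"
      using ord_ge_1[OF assms(1)] ord_eq_1 by auto
    then show ?thesis
      by linarith
  qed
  then have "(\<Prod>a\<in>A. 2) \<le> (\<Prod>a\<in>A. ord a)"
    by (intro prod_mono) auto
  then show ?thesis
    by simp
qed

lemma list_prod_perm_commuting:
  assumes "set xs \<subseteq> carrier G" "commuting_set G (set xs)" "mset xs = mset ys"
  shows "list_prod G xs = list_prod G ys"
  using assms
proof (induction xs arbitrary: ys)
  case Nil
  then show ?case by simp
next
  case (Cons a xs)
  obtain ys1 ys2 where ys: "ys = ys1 @ a # ys2"
    using Cons.prems(3) by (metis list.set_intros(1) set_mset_mset split_list)
  have set_ys: "set ys = set (a # xs)"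
    using Cons.prems(3) by (metis set_mset_mset)
  have a: "a \<in> carrier G" and ys12: "set ys1 \<subseteq> carrier G" "set ys2 \<subseteq> carrier G"
    using Cons.prems(1) set_ys ys by auto
  have "set xs \<subseteq> carrier G" "commuting_set G (set xs)" "mset xs = mset (ys1 @ ys2)"
    using Cons.prems ys by (auto simp: commuting_set_def)
  then have "list_prod G xs = list_prod G (ys1 @ ys2)"
    by (rule Cons.IH)
  moreover have "set ys1 \<subseteq> centralizer G a"
  proof
    fix y assume "y \<in> set ys1"
    then have "y \<in> set (a # xs)"
      using set_ys ys by auto
    then show "y \<in> centralizer G a"
      using Cons.prems(1,2) unfolding commuting_set_def centralizer_def by auto
  qed
  then have "list_prod G ys1 \<in> centralizer G a"
    by (rule list_prod_in_subgroup[OF subgroup_centralizer[OF a]])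
  then have "a \<otimes> list_prod G ys1 = list_prod G ys1 \<otimes> a"
    by (simp add: centralizer_def)
  ultimately show ?case
    using a ys12 by (simp add: ys list_prod_append m_assoc[symmetric])
qed

lemma seq_prods_commuting:
  assumes "set_mset S \<subseteq> carrier G" "commuting_set G (set_mset S)" "x \<in> seq_prods G S"
  shows "seq_prods G S = {x}"
proof -
  obtain xs where xs: "mset xs = S" "x = list_prod G xs"
    using assms(3) by (auto simp: seq_prods_eq)
  have "list_prod G ys = x" if "mset ys = S" for ys
    using list_prod_perm_commuting[of xs ys] xs that assms(1,2) by auto
  then show ?thesis
    using assms(3) by (auto simp: seq_prods_eq)
qed

lemma seq_prods_repeat_commuting:
  assumes "set_mset S \<subseteq> carrier G" "commuting_set G (set_mset S)" "seq_prods G S = {g}"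
  shows "seq_prods G (repeat_mset k S) = {g [^] k}"
proof (rule seq_prods_commuting)
  show "set_mset (repeat_mset k S) \<subseteq> carrier G" "commuting_set G (set_mset (repeat_mset k S))"
    using assms(1,2) by (simp_all add: set_mset_repeat_mset commuting_set_def)
  show "g [^] k \<in> seq_prods G (repeat_mset k S)"
    using pow_in_seq_prods_repeat[OF assms(1)] assms(3) by simp
qed

lemma commuting_Un_iff_noncentral:
  assumes "B \<subseteq> carrier G" "A \<subseteq> carrier G"
  shows "commuting_set G (B \<union> A) \<longleftrightarrow> commuting_set G ((B - group_center G) \<union> A)"
  using assms unfolding commuting_set_def group_center_def by (smt (verit) Diff_iff Un_iff mem_Collect_eq subsetD)

end

section \<open>Classes of sequences\<close>

lemma seq_class_eq_iff:
  assumes "S \<in> seqs G" "S' \<in> seqs G"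
  shows "seq_class G S = seq_class G S' \<longleftrightarrow>
    (\<forall>T \<in> seqs G. S + T \<in> prod_one_seqs G \<longleftrightarrow> S' + T \<in> prod_one_seqs G)"
proof
  assume "seq_class G S = seq_class G S'"
  then have "S' \<in> seq_class G S"
    using assms(2) by (simp add: seq_class_def seq_equiv_def)
  then show "\<forall>T \<in> seqs G. S + T \<in> prod_one_seqs G \<longleftrightarrow> S' + T \<in> prod_one_seqs G"
    by (simp add: seq_class_def seq_equiv_def)
next
  assume "\<forall>T \<in> seqs G. S + T \<in> prod_one_seqs G \<longleftrightarrow> S' + T \<in> prod_one_seqs G"
  then show "seq_class G S = seq_class G S'"
    unfolding seq_class_def seq_equiv_def by simp
qed

lemma seq_class_self: "S \<in> seqs G \<Longrightarrow> S \<in> seq_class G S"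
  by (simp add: seq_class_def seq_equiv_def)

lemma seq_class_eq_if_mem:
  assumes "S \<in> seqs G" "S' \<in> seq_class G S"
  shows "seq_class G S' = seq_class G S"
proof -
  have "S' \<in> seqs G" "\<forall>T \<in> seqs G. S + T \<in> prod_one_seqs G \<longleftrightarrow> S' + T \<in> prod_one_seqs G"
    using assms(2) by (simp_all add: seq_class_def seq_equiv_def)
  then show ?thesis
    using seq_class_eq_iff[of S' G S] assms(1) by simp
qed

lemma seq_class_add_cong:
  assumes seqs: "A \<in> seqs G" "A' \<in> seqs G" "B \<in> seqs G" "B' \<in> seqs G"
    and eqs: "seq_class G A' = seq_class G A" "seq_class G B' = seq_class G B"
  shows "seq_class G (A' + B') = seq_class G (A + B)"
proof -
  have A: "A' + T \<in> prod_one_seqs G \<longleftrightarrow> A + T \<in> prod_one_seqs G" if "T \<in> seqs G" for T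
    using seq_class_eq_iff[of A' G A] seqs eqs that by blast
  have B: "B' + T \<in> prod_one_seqs G \<longleftrightarrow> B + T \<in> prod_one_seqs G" if "T \<in> seqs G" for T
    using seq_class_eq_iff[of B' G B] seqs eqs that by blast
  have "A' + B' + T \<in> prod_one_seqs G \<longleftrightarrow> A + B + T \<in> prod_one_seqs G" if T: "T \<in> seqs G" for T
  proof -
    have "A' + B' + T \<in> prod_one_seqs G \<longleftrightarrow> A + (B' + T) \<in> prod_one_seqs G"
      using A[OF seqs_add[OF seqs(4) T]] by (simp add: add.assoc)
    also have "\<dots> \<longleftrightarrow> B + (A + T) \<in> prod_one_seqs G"
      using B[OF seqs_add[OF seqs(1) T]] by (simp add: add_ac)
    finally show ?thesis
      by (simp add: add_ac)
  qed
  then show ?thesis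
    using seq_class_eq_iff seqs seqs_add by blast
qed

lemma class_add_seq_class:
  assumes "A \<in> seqs G" "B \<in> seqs G"
  shows "class_add G (seq_class G A) (seq_class G B) = seq_class G (A + B)"
proof -
  define A' where "A' = (SOME U. U \<in> seq_class G A)"
  define B' where "B' = (SOME U. U \<in> seq_class G B)"
  have "A' \<in> seq_class G A" "B' \<in> seq_class G B"
    unfolding A'_def B'_def using seq_class_self assms by (metis someI)+
  moreover have "seq_class G S \<subseteq> seqs G" for S
    by (auto simp: seq_class_def)
  ultimately have "seq_class G (A' + B') = seq_class G (A + B)"
    using assms by (intro seq_class_add_cong seq_class_eq_if_mem) auto
  then show ?thesis
    by (simp add: class_add_def A'_def B'_def)
qed

lemma periodic_powers_group:
  fixes R :: "nat \<Rightarrow> 'c"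
  assumes n: "1 \<le> n"
    and mult: "\<And>i j. f (R i) (R j) = R (i + j)"
    and period: "\<And>k. 1 \<le> k \<Longrightarrow> R (k + n) = R k"
  defines "K \<equiv> \<lparr>carrier = R ` {1..n}, monoid.mult = f, one = R n\<rparr>"
  shows "group K" "\<forall>x \<in> carrier K. \<exists>k::nat. x = R 1 [^]\<^bsub>K\<^esub> k"
proof -
  have R_in: "R k \<in> R ` {1..n}" if "1 \<le> k" for k
    using that
  proof (induction k rule: less_induct)
    case (less k)
    show ?case
    proof (cases "k \<le> n")
      case True
      then show ?thesis using less.prems by simp
    next
      case False
      then have "R k = R (k - n)"
        using period[of "k - n"] n by simp
      then show ?thesis
        using less.IH[of "k - n"] False n by simp
    qed
  qed
  have pow: "R 1 [^]\<^bsub>K\<^esub> k = R (k + n)" for k :: nat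
    by (induction k) (simp_all add: K_def mult)
  show "group K"
  proof (rule groupI)
    fix x y assume "x \<in> carrier K" "y \<in> carrier K"
    then show "x \<otimes>\<^bsub>K\<^esub> y \<in> carrier K"
      using R_in by (auto simp: K_def mult)
  next
    show "\<one>\<^bsub>K\<^esub> \<in> carrier K"
      using n by (simp add: K_def)
  next
    fix x y z assume "x \<in> carrier K" "y \<in> carrier K" "z \<in> carrier K"
    then show "x \<otimes>\<^bsub>K\<^esub> y \<otimes>\<^bsub>K\<^esub> z = x \<otimes>\<^bsub>K\<^esub> (y \<otimes>\<^bsub>K\<^esub> z)"
      by (auto simp: K_def mult add.assoc)
  next
    fix x assume "x \<in> carrier K"
    then show "\<one>\<^bsub>K\<^esub> \<otimes>\<^bsub>K\<^esub> x = x"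
      using period by (auto simp: K_def mult add.commute)
  next
    fix x assume "x \<in> carrier K"
    then obtain i where i: "i \<in> {1..n}" "x = R i"
      by (auto simp: K_def)
    then have "R (n + n - i) \<otimes>\<^bsub>K\<^esub> x = \<one>\<^bsub>K\<^esub>"
      using period[of n] n by (simp add: K_def mult)
    moreover have "R (n + n - i) \<in> carrier K"
      using R_in[of "n + n - i"] i by (simp add: K_def le_diff_conv2)
    ultimately show "\<exists>y \<in> carrier K. y \<otimes>\<^bsub>K\<^esub> x = \<one>\<^bsub>K\<^esub>"
      by blast
  qed
  show "\<forall>x \<in> carrier K. \<exists>k::nat. x = R 1 [^]\<^bsub>K\<^esub> k"
  proof
    fix x assume "x \<in> carrier K"
    then obtain i where "1 \<le> i" "x = R i"
      by (auto simp: K_def)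
    then have "x = R 1 [^]\<^bsub>K\<^esub> i"
      using pow[of i] period[of i] by simp
    then show "\<exists>k::nat. x = R 1 [^]\<^bsub>K\<^esub> k" ..
  qed
qed

lemma zvec_eq_iff: "zvec M = zvec N \<longleftrightarrow> M = N"
  by (auto simp: zvec_def fun_eq_iff multiset_eq_iff)

lemma zvec_scaled_imp_repeat_mset:
  assumes "zvec S = (\<lambda>g. int k * x g)" "0 < k"
  shows "\<exists>M. zvec M = x \<and> S = repeat_mset k M"
proof -
  have count_S: "int (count S g) = int k * x g" for g
    using fun_cong[OF assms(1), of g] by (simp add: zvec_def)
  have x_nonneg: "0 \<le> x g" for g
  proof -
    have "0 \<le> int k * x g"
      using count_S[of g] by simp
    then show ?thesis
      using assms(2) by (simp add: zero_le_mult_iff)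
  qed
  have count_eq: "count S g = k * nat (x g)" for g
  proof -
    have "int (count S g) = int (k * nat (x g))"
      using count_S[of g] x_nonneg[of g] by simp
    then show ?thesis
      by (simp only: of_nat_eq_iff)
  qed
  have "finite {g. 0 < nat (x g)}"
    by (rule finite_subset[of _ "set_mset S"])
      (use assms(2) in \<open>auto simp: count_eq simp flip: count_greater_zero_iff\<close>)
  then have count_M: "count (Abs_multiset (\<lambda>g. nat (x g))) g = nat (x g)" for g
    by (simp add: count_Abs_multiset)
  have "zvec (Abs_multiset (\<lambda>g. nat (x g))) = x"
    using x_nonneg by (simp add: zvec_def count_M fun_eq_iff)
  moreover have "S = repeat_mset k (Abs_multiset (\<lambda>g. nat (x g)))"
    by (simp add: multiset_eq_iff count_M count_eq)
  ultimately show ?thesis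
    by blast
qed

section \<open>Groups whose commutator subgroup has order two\<close>

locale derived_order_two = group G for G (structure) +
  fixes eps
  assumes finite_carrier: "finite (carrier G)"
    and derived_eq: "derived G (carrier G) = {\<one>, eps}"
    and eps_neq_one: "eps \<noteq> \<one>"
begin

lemma eps_closed: "eps \<in> carrier G"
  using derived_in_carrier[of "carrier G"] derived_eq by auto

lemma eps_square: "eps \<otimes> eps = \<one>"
proof -
  have "eps \<otimes> eps \<in> {\<one>, eps}"
    using subgroup.m_closed[OF derived_is_subgroup[of "carrier G"]] derived_eq by auto
  moreover have "eps \<otimes> eps \<noteq> eps"
    using eps_closed eps_neq_one by simp
  ultimately show ?thesis
    by blast
qed

lemma eps_mult_eps: "x \<in> carrier G \<Longrightarrow> eps \<otimes> (eps \<otimes> x) = x"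
  using eps_closed eps_square by (simp flip: m_assoc)

lemma eps_central:
  assumes g: "g \<in> carrier G"
  shows "eps \<otimes> g = g \<otimes> eps"
proof -
  have conj: "g \<otimes> eps \<otimes> inv g = c \<longleftrightarrow> g \<otimes> eps = c \<otimes> g" if "c \<in> carrier G" for c
    using g eps_closed that by (simp add: inv_solve_right')
  have "g \<otimes> eps \<otimes> inv g \<in> {\<one>, eps}"
    using normal.inv_op_closed2[OF derived_self_is_normal g] derived_eq by auto
  moreover have "g \<otimes> eps \<otimes> inv g \<noteq> \<one>"
    using conj[of \<one>] g eps_closed eps_neq_one by simp
  ultimately show ?thesis
    using conj[OF eps_closed] by auto
qed

lemma eps_in_center: "eps \<in> group_center G"
  using eps_closed eps_central by (simp add: group_center_def)

lemma commute_or_eps: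
  assumes ab: "a \<in> carrier G" "b \<in> carrier G"
  shows "a \<otimes> b = b \<otimes> a \<or> a \<otimes> b = eps \<otimes> (b \<otimes> a)"
proof -
  define c where "c = a \<otimes> b \<otimes> inv a \<otimes> inv b"
  have "c \<in> {\<one>, eps}"
    unfolding c_def derived_eq[symmetric] derived_def
    using ab by (blast intro: generate.incl)
  moreover have "inv b \<otimes> (b \<otimes> a) = a"
    using ab by (simp add: m_assoc[symmetric])
  then have "a \<otimes> b = c \<otimes> (b \<otimes> a)"
    using ab by (simp add: c_def m_assoc)
  ultimately show ?thesis
    using ab by auto
qed

lemma center_neq_carrier: "group_center G \<noteq> carrier G"
proof
  assume "group_center G = carrier G"
  then have "comm_group G"
    by (intro group_comm_groupI) (auto simp: group_center_def)
  then have "derived G (carrier G) = {\<one>}"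
    by (simp add: comm_group.derived_eq_singleton)
  then show False
    using derived_eq eps_neq_one by auto
qed

lemma list_prod_perm:
  assumes "set xs \<subseteq> carrier G" "mset xs = mset ys"
  shows "list_prod G xs = list_prod G ys \<or> list_prod G xs = eps \<otimes> list_prod G ys"
  using assms
proof (induction xs arbitrary: ys)
  case Nil
  then show ?case by simp
next
  case (Cons a xs)
  obtain ys1 ys2 where ys: "ys = ys1 @ a # ys2"
    using Cons.prems(2) by (metis list.set_intros(1) set_mset_mset split_list)
  have a: "a \<in> carrier G"
    using Cons.prems(1) by simp
  have "set ys = set (a # xs)"
    using Cons.prems(2) by (metis set_mset_mset)
  then have ys12: "set ys1 \<subseteq> carrier G" "set ys2 \<subseteq> carrier G"
    using Cons.prems(1) ys by auto
  define p1 where "p1 = list_prod G ys1"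
  define p2 where "p2 = list_prod G ys2"
  have p: "p1 \<in> carrier G" "p2 \<in> carrier G"
    using ys12 by (simp_all add: p1_def p2_def)
  have ys_prod: "list_prod G ys = p1 \<otimes> (a \<otimes> p2)"
    using a ys12 by (simp add: ys list_prod_append p1_def p2_def)
  have IH: "list_prod G xs = p1 \<otimes> p2 \<or> list_prod G xs = eps \<otimes> (p1 \<otimes> p2)"
    using Cons.IH[of "ys1 @ ys2"] Cons.prems ys ys12 by (simp add: list_prod_append p1_def p2_def)
  have swap: "a \<otimes> (p1 \<otimes> p2) = list_prod G ys \<or> a \<otimes> (p1 \<otimes> p2) = eps \<otimes> list_prod G ys"
    using commute_or_eps[OF a p(1)] a p eps_closed by (auto simp: ys_prod m_assoc[symmetric])
  have "list_prod G (a # xs) = a \<otimes> (p1 \<otimes> p2) \<or> list_prod G (a # xs) = eps \<otimes> (a \<otimes> (p1 \<otimes> p2))"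
    using IH a p eps_closed eps_central[OF a] by (auto simp: m_assoc[symmetric])
  then show ?case
    using swap eps_mult_eps a p ys_prod by auto
qed

lemma noncommuting_rearrangement:
  assumes "set_mset S \<subseteq> carrier G" "\<not> commuting_set G (set_mset S)"
  shows "\<exists>xs ys. mset xs = S \<and> mset ys = S \<and> list_prod G ys = eps \<otimes> list_prod G xs"
proof -
  obtain a b where ab: "a \<in># S" "b \<in># S" "a \<otimes> b \<noteq> b \<otimes> a"
    using assms(2) unfolding commuting_set_def by blast
  then have "b \<in># S - {#a#}"
    by (auto simp: in_diff_count)
  obtain rs where rs: "mset rs = S - {#a#} - {#b#}"
    using ex_mset by blast
  have "add_mset b (mset rs) = S - {#a#}"
    using insert_DiffM[OF \<open>b \<in># S - {#a#}\<close>] rs by simp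
  then have S: "mset (a # b # rs) = S" "mset (b # a # rs) = S"
    using insert_DiffM[OF ab(1)] by (simp_all add: add_mset_commute)
  have carrier: "a \<in> carrier G" "b \<in> carrier G" "set rs \<subseteq> carrier G"
    using ab assms(1) S(1) by auto
  have "a \<otimes> b = eps \<otimes> (b \<otimes> a)"
    using commute_or_eps carrier ab(3) by blast
  then have "list_prod G (a # b # rs) = eps \<otimes> list_prod G (b # a # rs)"
    using carrier eps_closed by (simp add: m_assoc[symmetric])
  then show ?thesis
    using S by blast
qed

lemma seq_prods_noncommuting:
  assumes S: "set_mset S \<subseteq> carrier G" "\<not> commuting_set G (set_mset S)" and x: "x \<in> seq_prods G S"
  shows "seq_prods G S = {x, eps \<otimes> x}"
proof -
  have rel: "y = z \<or> y = eps \<otimes> z" if y: "y \<in> seq_prods G S" and z: "z \<in> seq_prods G S" for y z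
  proof -
    obtain ys zs where "mset ys = S" "y = list_prod G ys" "mset zs = S" "z = list_prod G zs"
      using y z unfolding seq_prods_eq by blast
    then show ?thesis
      using list_prod_perm[of ys zs] S(1) by auto
  qed
  obtain p q where pq: "p \<in> seq_prods G S" "q \<in> seq_prods G S" "q = eps \<otimes> p"
    using noncommuting_rearrangement[OF S] unfolding seq_prods_eq by blast
  have "p \<in> carrier G"
    using pq(1) seq_prods_closed S(1) by blast
  then have "eps \<otimes> x \<in> seq_prods G S"
    using rel[OF x pq(1)] pq eps_mult_eps by auto
  then show ?thesis
    using rel x by auto
qed

lemma one_in_seq_prods_iff:
  assumes "set_mset S \<subseteq> carrier G" "x \<in> seq_prods G S"
  shows "\<one> \<in> seq_prods G S \<longleftrightarrow> x = \<one> \<or> (\<not> commuting_set G (set_mset S) \<and> x = eps)"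
proof (cases "commuting_set G (set_mset S)")
  case True
  then show ?thesis
    using seq_prods_commuting assms by auto
next
  case False
  have "x \<in> carrier G"
    using assms seq_prods_closed by blast
  then have "\<one> = eps \<otimes> x \<longleftrightarrow> x = eps"
    using eps_mult_eps[of x] eps_closed eps_square by auto
  then show ?thesis
    using seq_prods_noncommuting[OF assms(1) False assms(2)] False by auto
qed

lemma seq_class_eqI:
  assumes S: "S \<in> seqs G" "S' \<in> seqs G" and x: "x \<in> seq_prods G S" "x \<in> seq_prods G S'"
    and commuting: "\<And>A. A \<subseteq> carrier G \<Longrightarrow>
      commuting_set G (set_mset S \<union> A) \<longleftrightarrow> commuting_set G (set_mset S' \<union> A)"
  shows "seq_class G S = seq_class G S'"
proof -
  have "S + T \<in> prod_one_seqs G \<longleftrightarrow> S' + T \<in> prod_one_seqs G" if T: "T \<in> seqs G" for T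
  proof -
    obtain y where y: "y \<in> seq_prods G T"
      by (rule seq_prods_nonempty)
    have "x \<otimes> y \<in> seq_prods G (S + T)" "x \<otimes> y \<in> seq_prods G (S' + T)"
      using seq_prods_add S T x y by (auto simp: seqs_def)
    then show ?thesis
      using one_in_seq_prods_iff[of "S + T"] one_in_seq_prods_iff[of "S' + T"]
        commuting[of "set_mset T"] S T seqs_add
      by (auto simp: prod_one_seqs_def seqs_def)
  qed
  then show ?thesis
    using seq_class_eq_iff S by blast
qed

lemma seq_class_eq_if_same_support:
  assumes "S \<in> seqs G" "S' \<in> seqs G" "set_mset S = set_mset S'"
    and "x \<in> seq_prods G S" "x \<in> seq_prods G S'"
  shows "seq_class G S = seq_class G S'"
  by (rule seq_class_eqI[OF assms(1,2,4,5)]) (simp add: assms(3))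

lemma seq_class_repeat_add_ord:
  assumes S: "S \<in> seqs G" and g: "g \<in> seq_prods G S" and k: "1 \<le> k"
  shows "seq_class G (repeat_mset (k + ord g) S) = seq_class G (repeat_mset k S)"
proof (rule seq_class_eq_if_same_support[where x = "g [^] k"])
  show "repeat_mset (k + ord g) S \<in> seqs G" "repeat_mset k S \<in> seqs G"
    using S by (simp_all add: repeat_mset_in_seqs)
  show "set_mset (repeat_mset (k + ord g) S) = set_mset (repeat_mset k S)"
    using k by (simp add: set_mset_repeat_mset)
  have S_carrier: "set_mset S \<subseteq> carrier G"
    using S by (simp add: seqs_def)
  then have g_carrier: "g \<in> carrier G"
    using g seq_prods_closed by blast
  have "g [^] (k + ord g) = g [^] k \<otimes> g [^] ord g"
    by (rule nat_pow_mult[OF g_carrier, symmetric])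
  also have "\<dots> = g [^] k"
    using g_carrier by simp
  finally show "g [^] k \<in> seq_prods G (repeat_mset (k + ord g) S)"
    using pow_in_seq_prods_repeat[OF S_carrier g, of "k + ord g"] by simp
  show "g [^] k \<in> seq_prods G (repeat_mset k S)"
    using pow_in_seq_prods_repeat[OF S_carrier g] .
qed

lemma repeat_classes_group:
  assumes S: "S \<in> seqs G" and g: "g \<in> seq_prods G S"
  defines "K \<equiv> \<lparr>carrier = (\<lambda>k. seq_class G (repeat_mset k S)) ` {1..ord g},
    monoid.mult = class_add G, one = seq_class G (repeat_mset (ord g) S)\<rparr>"
  shows "group K" "\<forall>x \<in> carrier K. \<exists>k::nat. x = seq_class G S [^]\<^bsub>K\<^esub> k"
proof -
  have ord: "1 \<le> ord g"
    using ord_ge_1 finite_carrier seq_prods_closed g S by (auto simp: seqs_def)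
  have mult: "class_add G (seq_class G (repeat_mset i S)) (seq_class G (repeat_mset j S))
      = seq_class G (repeat_mset (i + j) S)" for i j
    using class_add_seq_class[OF repeat_mset_in_seqs[OF S] repeat_mset_in_seqs[OF S]]
    by (simp add: repeat_mset_distrib)
  note powers = periodic_powers_group[of "ord g" "class_add G" "\<lambda>k. seq_class G (repeat_mset k S)",
      OF ord mult seq_class_repeat_add_ord[OF S g]]
  show "group K"
    using powers(1) unfolding K_def .
  have "repeat_mset 1 S = S"
    by (simp add: One_nat_def)
  then show "\<forall>x \<in> carrier K. \<exists>k::nat. x = seq_class G S [^]\<^bsub>K\<^esub> k"
    using powers(2) unfolding K_def by simp
qed

lemma repeat_classes_subgroup:
  assumes "S \<in> seqs G" "g \<in> seq_prods G S"
  shows "semigroup_subgroup (class_semigroup G) (class_add G)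
    ((\<lambda>k. seq_class G (repeat_mset k S)) ` {1..ord g})"
proof -
  have "(\<lambda>k. seq_class G (repeat_mset k S)) ` {1..ord g} \<subseteq> class_semigroup G"
    using repeat_mset_in_seqs[OF assms(1)] by (auto simp: class_semigroup_def)
  then show ?thesis
    using repeat_classes_group(1)[OF assms] unfolding semigroup_subgroup_def by blast
qed

lemma clifford_class_semigroup: "clifford_semigroup (class_semigroup G) (class_add G)"
  unfolding clifford_semigroup_def
proof
  fix x assume "x \<in> class_semigroup G"
  then obtain S where S: "S \<in> seqs G" and x: "x = seq_class G S"
    by (auto simp: class_semigroup_def)
  obtain g where g: "g \<in> seq_prods G S"
    by (rule seq_prods_nonempty)
  have "1 \<le> ord g"
    using ord_ge_1 finite_carrier seq_prods_closed g S by (auto simp: seqs_def)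
  then have "x \<in> (\<lambda>k. seq_class G (repeat_mset k S)) ` {1..ord g}"
    using x by (auto intro!: image_eqI[of _ _ 1])
  then show "\<exists>K. semigroup_subgroup (class_semigroup G) (class_add G) K \<and> x \<in> K"
    using repeat_classes_subgroup[OF S g] by blast
qed

lemma commuting_if_seq_prods_singleton:
  assumes "S \<in> seqs G" "seq_prods G S = {g}"
  shows "commuting_set G (set_mset S)"
proof (rule ccontr)
  assume "\<not> commuting_set G (set_mset S)"
  then have "eps \<otimes> g = g"
    using seq_prods_noncommuting[of S g] assms by (auto simp: seqs_def)
  moreover have "g \<in> carrier G"
    using assms seq_prods_closed by (auto simp: seqs_def)
  ultimately show False
    using eps_closed eps_neq_one by simp
qed

lemma card_repeat_classes:
  assumes S: "S \<in> seqs G" and g: "seq_prods G S = {g}"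
  shows "card ((\<lambda>k. seq_class G (repeat_mset k S)) ` {1..ord g}) = ord g"
proof -
  define R where "R k = seq_class G (repeat_mset k S)" for k
  have S_carrier: "set_mset S \<subseteq> carrier G"
    using S by (simp add: seqs_def)
  then have g_carrier: "g \<in> carrier G"
    using g seq_prods_closed by blast
  have prods: "seq_prods G (repeat_mset k S) = {g [^] k}" for k
    using seq_prods_repeat_commuting[OF S_carrier commuting_if_seq_prods_singleton[OF S g] g] .
  have one_iff: "repeat_mset k S \<in> prod_one_seqs G \<longleftrightarrow> ord g dvd k" for k
  proof -
    have "repeat_mset k S \<in> prod_one_seqs G \<longleftrightarrow> g [^] k = \<one>"
      using repeat_mset_in_seqs[OF S] by (auto simp: prod_one_seqs_def prods)
    also have "\<dots> \<longleftrightarrow> ord g dvd k"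
      by (rule pow_eq_id[OF g_carrier])
    finally show ?thesis .
  qed
  have eq: "i = j" if ij: "1 \<le> i" "i \<le> j" "j \<le> ord g" and R: "R i = R j" for i j
  proof -
    have "repeat_mset j S + repeat_mset (ord g - j) S \<in> prod_one_seqs G \<longleftrightarrow>
        repeat_mset i S + repeat_mset (ord g - j) S \<in> prod_one_seqs G"
      using R seq_class_eq_iff[of "repeat_mset i S" G "repeat_mset j S"] S repeat_mset_in_seqs
      unfolding R_def by blast
    then have "ord g dvd j + (ord g - j) \<longleftrightarrow> ord g dvd i + (ord g - j)"
      by (simp only: repeat_mset_distrib[symmetric] one_iff)
    then have "ord g dvd i + (ord g - j)"
      using ij by simp
    moreover have "0 < i + (ord g - j)"
      using ij by simp
    ultimately have "ord g \<le> i + (ord g - j)"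
      by (rule dvd_imp_le)
    then show "i = j"
      using ij by simp
  qed
  have "inj_on R {1..ord g}"
  proof (rule inj_onI)
    fix i j assume "i \<in> {1..ord g}" "j \<in> {1..ord g}" "R i = R j"
    then show "i = j"
      using eq[of i j] eq[of j i] by (cases "i \<le> j") auto
  qed
  then have "card (R ` {1..ord g}) = ord g"
    by (simp add: card_image)
  then show ?thesis
    by (simp add: R_def)
qed

lemma repeat_classes_cyclic_subgroup:
  assumes "S \<in> seqs G" "seq_prods G S = {g}"
  defines "K \<equiv> (\<lambda>k. seq_class G (repeat_mset k S)) ` {1..ord g}"
  defines "KG \<equiv> \<lparr>carrier = K, monoid.mult = class_add G, one = seq_class G (repeat_mset (ord g) S)\<rparr>"
  shows "semigroup_subgroup (class_semigroup G) (class_add G) K \<and> group KG \<and> card K = ord g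
    \<and> (\<forall>x \<in> K. \<exists>k::nat. x = seq_class G S [^]\<^bsub>KG\<^esub> k)"
  using repeat_classes_subgroup[of S g] repeat_classes_group[of S g] card_repeat_classes[of S g] assms
  by (simp add: K_def KG_def)

lemma prod_one_if_double_and_triple:
  assumes M: "M \<in> seqs G" and two: "M + M \<in> prod_one_seqs G" and three: "M + M + M \<in> prod_one_seqs G"
  shows "M \<in> prod_one_seqs G"
proof -
  have M_carrier: "set_mset M \<subseteq> carrier G"
    using M by (simp add: seqs_def)
  obtain y where y: "y \<in> seq_prods G M"
    by (rule seq_prods_nonempty)
  have y_carrier: "y \<in> carrier G"
    using M_carrier y seq_prods_closed by blast
  have "y \<otimes> y \<in> seq_prods G (M + M)" "y \<otimes> y \<otimes> y \<in> seq_prods G (M + M + M)"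
    using seq_prods_add M_carrier y by auto
  then have yy: "y \<otimes> y = \<one> \<or> (\<not> commuting_set G (set_mset M) \<and> y \<otimes> y = eps)"
    and yyy: "y \<otimes> y \<otimes> y = \<one> \<or> (\<not> commuting_set G (set_mset M) \<and> y \<otimes> y \<otimes> y = eps)"
    using one_in_seq_prods_iff[of "M + M"] one_in_seq_prods_iff[of "M + M + M"] two three M_carrier
    by (auto simp: prod_one_seqs_def)
  have "y = \<one> \<or> (\<not> commuting_set G (set_mset M) \<and> y = eps)"
    using yy
  proof
    assume "y \<otimes> y = \<one>"
    then show ?thesis
      using yyy y_carrier by simp
  next
    assume "\<not> commuting_set G (set_mset M) \<and> y \<otimes> y = eps"
    then have "eps \<otimes> y = \<one> \<or> eps \<otimes> y = eps"
      using yyy y_carrier by auto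
    then show ?thesis
      using eps_mult_eps[OF y_carrier] eps_closed y_carrier \<open>\<not> commuting_set G (set_mset M) \<and> _\<close>
      by auto
  qed
  then show ?thesis
    using one_in_seq_prods_iff[OF M_carrier y] M by (simp add: prod_one_seqs_def)
qed

lemma seminormal_prod_one_seqs: "seminormal (prod_one_seqs G)"
  unfolding seminormal_def
proof (intro ballI impI)
  fix x
  assume "(\<exists>S \<in> prod_one_seqs G. zvec S = (\<lambda>g. 2 * x g))
    \<and> (\<exists>S \<in> prod_one_seqs G. zvec S = (\<lambda>g. 3 * x g))"
  then obtain S2 S3 where S2: "S2 \<in> prod_one_seqs G" "zvec S2 = (\<lambda>g. int 2 * x g)"
    and S3: "S3 \<in> prod_one_seqs G" "zvec S3 = (\<lambda>g. int 3 * x g)"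
    by auto
  obtain M where M: "zvec M = x" "S2 = repeat_mset 2 M"
    using zvec_scaled_imp_repeat_mset[OF S2(2)] by auto
  obtain M' where M': "zvec M' = x" "S3 = repeat_mset 3 M'"
    using zvec_scaled_imp_repeat_mset[OF S3(2)] by auto
  have "zvec M' = zvec M"
    using M(1) M'(1) by simp
  then have "M' = M"
    by (simp add: zvec_eq_iff)
  then have "M + M \<in> prod_one_seqs G" "M + M + M \<in> prod_one_seqs G"
    using S2(1) S3(1) M M' by (simp_all add: numeral_2_eq_2 numeral_3_eq_3 add.assoc)
  moreover have "M \<in> seqs G"
    using S2(1) M(2) by (simp add: prod_one_seqs_def seqs_def set_mset_repeat_mset)
  ultimately show "\<exists>S \<in> prod_one_seqs G. zvec S = x"
    using prod_one_if_double_and_triple M(1) by blast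
qed

end

section \<open>Counting classes\<close>

lemma card_image_le_if_factors:
  assumes "finite (f ` A)" "\<And>x y. x \<in> A \<Longrightarrow> y \<in> A \<Longrightarrow> f x = f y \<Longrightarrow> g x = g y"
  shows "card (g ` A) \<le> card (f ` A)"
proof -
  define h where "h d = g (SOME x. x \<in> A \<and> f x = d)" for d
  have h: "h (f x) = g x" if x: "x \<in> A" for x
  proof -
    have "\<exists>y. y \<in> A \<and> f y = f x"
      using x by blast
    then have "(SOME y. y \<in> A \<and> f y = f x) \<in> A \<and> f (SOME y. y \<in> A \<and> f y = f x) = f x"
      by (rule someI_ex)
    then show ?thesis
      unfolding h_def using assms(2) x by blast
  qed
  have "g ` A = h ` f ` A"
    unfolding image_image by (intro image_cong) (simp_all add: h)
  then show ?thesis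
    using card_image_le[OF assms(1), of h] by simp
qed

lemma two_pow_bound:
  fixes e h m :: nat
  assumes e: "1 \<le> e" and h: "e + 3 \<le> h" and m: "h + e + 1 \<le> m"
  shows "m + h + m * 2 ^ e * h \<le> 2 ^ m"
  using m
proof (induction m rule: nat_induct_at_least)
  case base
  have h4: "4 \<le> h"
    using e h by simp
  have sq: "h * h \<le> 2 ^ h"
    using h4
  proof (induction h rule: nat_induct_at_least)
    case (Suc h)
    have "Suc h * Suc h = h * h + 2 * h + 1"
      by simp
    also have "\<dots> \<le> h * h + h * h"
      using mult_le_mono1[OF Suc.hyps, of h] Suc.hyps by linarith
    also have "\<dots> \<le> 2 ^ Suc h"
      using Suc.IH by simp
    finally show ?case .
  qed simp
  define P :: nat where "P = 2 ^ e"
  have P: "2 \<le> P"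
    unfolding P_def using e by (metis one_le_numeral power_increasing power_one_right)
  have "(h + e + 1) + h + (h + e + 1) * P * h \<le> 3 * h + (2 * h - 2) * P * h"
    using h by (intro add_mono mult_le_mono1) auto
  also have "\<dots> \<le> 2 * P * h + (2 * h - 2) * P * h"
    using P by simp
  also have "\<dots> = 2 * P * (h * h)"
    using h4 by (simp add: algebra_simps)
  also have "\<dots> \<le> 2 * P * 2 ^ h"
    using sq by simp
  also have "\<dots> = 2 ^ (h + e + 1)"
    by (simp add: P_def power_add)
  finally show ?case
    by (simp add: P_def)
next
  case (Suc m)
  have "(h + 1) * 2 ^ e \<le> 2 ^ (h + 1) * (2::nat) ^ e"
    by (intro mult_le_mono1 less_imp_le less_exp)
  also have "\<dots> = 2 ^ (h + e + 1)"
    by (simp add: power_add)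
  also have "\<dots> \<le> 2 ^ m"
    using Suc.hyps by (intro power_increasing) simp_all
  finally have "(h + 1) * 2 ^ e \<le> (2::nat) ^ m" .
  moreover have "(h + 1) * 2 ^ e = 2 ^ e * h + (2::nat) ^ e" "0 < (2::nat) ^ e"
    by (simp_all add: algebra_simps)
  ultimately have "2 ^ e * h + 1 \<le> (2::nat) ^ m"
    by linarith
  then show ?case
    using Suc.IH by (simp add: algebra_simps)
qed

definition class_invariant :: "('a, 'b) monoid_scheme \<Rightarrow> 'a multiset \<Rightarrow> 'a set option \<times> 'a set" where
  "class_invariant G S =
    (if commuting_set G (set_mset S) then Some (set_mset S - group_center G) else None, seq_prods G S)"

context derived_order_two
begin

lemma seq_class_eq_if_class_invariant_eq:
  assumes S: "S \<in> seqs G" "S' \<in> seqs G" and eq: "class_invariant G S = class_invariant G S'"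
  shows "seq_class G S = seq_class G S'"
proof -
  obtain x where x: "x \<in> seq_prods G S"
    by (rule seq_prods_nonempty)
  show ?thesis
  proof (rule seq_class_eqI[OF S x])
    show "x \<in> seq_prods G S'"
      using x eq by (simp add: class_invariant_def)
    fix A assume A: "A \<subseteq> carrier G"
    show "commuting_set G (set_mset S \<union> A) \<longleftrightarrow> commuting_set G (set_mset S' \<union> A)"
    proof (cases "commuting_set G (set_mset S)")
      case True
      then have "set_mset S - group_center G = set_mset S' - group_center G"
        using eq by (auto simp: class_invariant_def split: if_splits)
      moreover have "set_mset S \<subseteq> carrier G" "set_mset S' \<subseteq> carrier G"
        using S by (simp_all add: seqs_def)
      ultimately show ?thesis
        using commuting_Un_iff_noncentral[OF _ A] by metis
    next
      case False
      then have "\<not> commuting_set G (set_mset S')"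
        using eq by (auto simp: class_invariant_def split: if_splits)
      with False show ?thesis
        by (auto simp: commuting_set_def)
    qed
  qed
qed

lemma class_invariant_cases:
  assumes S: "S \<in> seqs G"
  obtains (noncommuting) x where "x \<in> carrier G" "class_invariant G S = (None, {x, eps \<otimes> x})"
    | (central) z where "z \<in> group_center G" "class_invariant G S = (Some {}, {z})"
    | (noncentral) n B x where "n \<in> carrier G - group_center G"
        "B \<subseteq> centralizer G n - group_center G - {n}" "x \<in> centralizer G n"
        "class_invariant G S = (Some (insert n B), {x})"
proof -
  have S_carrier: "set_mset S \<subseteq> carrier G"
    using S by (simp add: seqs_def)
  obtain xs where xs: "mset xs = S"
    using ex_mset by blast
  define x where "x = list_prod G xs"
  have x: "x \<in> seq_prods G S"
    using xs by (auto simp: seq_prods_eq x_def)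
  show thesis
  proof (cases "commuting_set G (set_mset S)")
    case False
    then show thesis
      using noncommuting[of x] seq_prods_noncommuting[OF S_carrier False x] x S_carrier seq_prods_closed
      by (auto simp: class_invariant_def)
  next
    case True
    have prods: "seq_prods G S = {x}"
      using seq_prods_commuting[OF S_carrier True x] .
    show thesis
    proof (cases "set_mset S \<subseteq> group_center G")
      case True
      then have "x \<in> group_center G"
        using list_prod_in_subgroup[OF subgroup_group_center] xs by (auto simp: x_def)
      then show thesis
        using central \<open>commuting_set G (set_mset S)\<close> True prods by (auto simp: class_invariant_def)
    next
      case False
      then obtain n where n: "n \<in> set_mset S - group_center G"
        by blast
      have "set_mset S \<subseteq> centralizer G n"
        using \<open>commuting_set G (set_mset S)\<close> n S_carrier
        by (auto simp: commuting_set_def centralizer_def)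
      then have "x \<in> centralizer G n"
        using list_prod_in_subgroup[OF subgroup_centralizer] n S_carrier xs by (auto simp: x_def)
      moreover have "set_mset S - group_center G = insert n (set_mset S - group_center G - {n})"
        using n by blast
      ultimately show thesis
        using noncentral[of n "set_mset S - group_center G - {n}" x] n S_carrier True prods
          \<open>set_mset S \<subseteq> centralizer G n\<close>
        by (auto simp: class_invariant_def)
    qed
  qed
qed

lemma finite_group_center: "finite (group_center G)"
  using finite_carrier subgroup.subset[OF subgroup_group_center] by (rule finite_subset[rotated])

lemma finite_centralizer: "finite (centralizer G n)"
  using finite_carrier by (rule rev_finite_subset) (auto simp: centralizer_def)

lemma two_le_card_center: "2 \<le> card (group_center G)"
proof -
  have "{\<one>, eps} \<subseteq> group_center G"
    using eps_in_center subgroup.one_closed[OF subgroup_group_center] by blast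
  then have "card {\<one>, eps} \<le> card (group_center G)"
    by (rule card_mono[OF finite_group_center])
  then show ?thesis
    using eps_neq_one by simp
qed

lemma card_centralizer_bounds:
  assumes n: "n \<in> carrier G - group_center G"
  shows "card (group_center G) + 2 \<le> card (centralizer G n)"
    and "2 * card (centralizer G n) \<le> card (carrier G)"
proof -
  have sub: "subgroup (centralizer G n) G"
    using subgroup_centralizer n by blast
  have "eps \<otimes> n \<in> centralizer G n"
    using n eps_closed eps_central by (simp add: centralizer_def m_assoc)
  moreover have "eps \<otimes> n \<notin> group_center G"
  proof
    assume "eps \<otimes> n \<in> group_center G"
    then have "eps \<otimes> (eps \<otimes> n) \<in> group_center G"
      using eps_in_center subgroup.m_closed[OF subgroup_group_center] by blast
    then show False
      using n eps_mult_eps by simp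
  qed
  moreover have "eps \<otimes> n \<noteq> n"
    using n eps_closed eps_neq_one by simp
  moreover have "n \<in> centralizer G n"
    using n by (simp add: centralizer_def)
  ultimately have "group_center G \<union> {n, eps \<otimes> n} \<subseteq> centralizer G n"
    "card (group_center G \<union> {n, eps \<otimes> n}) = card (group_center G) + 2"
    using n group_center_subset_centralizer finite_group_center by (auto simp: card_insert_if)
  then show "card (group_center G) + 2 \<le> card (centralizer G n)"
    using card_mono[OF finite_centralizer] by metis
  have "centralizer G n \<noteq> carrier G"
  proof
    assume "centralizer G n = carrier G"
    then have "g \<in> centralizer G n" if "g \<in> carrier G" for g
      using that by simp
    then have "g \<otimes> n = n \<otimes> g" if "g \<in> carrier G" for g
      using that by (simp add: centralizer_def)
    then show False
      using n by (simp add: group_center_def)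
  qed
  then show "2 * card (centralizer G n) \<le> card (carrier G)"
    using card_proper_subgroup finite_carrier sub by blast
qed

lemma finite_class_invariant_image: "finite (class_invariant G ` seqs G)"
proof (rule finite_subset)
  show "class_invariant G ` seqs G \<subseteq> insert None (Some ` Pow (carrier G)) \<times> Pow (carrier G)"
  proof
    fix d assume "d \<in> class_invariant G ` seqs G"
    then obtain S where S: "set_mset S \<subseteq> carrier G" and d: "d = class_invariant G S"
      by (auto simp: seqs_def)
    then have "set_mset S - group_center G \<in> Pow (carrier G)"
      by auto
    then show "d \<in> insert None (Some ` Pow (carrier G)) \<times> Pow (carrier G)"
      using seq_prods_closed[OF S] by (auto simp: d class_invariant_def)
  qed
qed (use finite_carrier in simp)

lemma card_centralizer_pairs_le:
  assumes n: "n \<in> carrier G - group_center G"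
  defines "c \<equiv> card (group_center G)" and "h \<equiv> card (carrier G) div 2"
  shows "card (Pow (centralizer G n - group_center G - {n}) \<times> centralizer G n) \<le> 2 ^ (h - c - 1) * h"
proof -
  have "card (centralizer G n - group_center G) = card (centralizer G n) - c"
    unfolding c_def using n
    by (intro card_Diff_subset finite_group_center group_center_subset_centralizer) auto
  then have "card (centralizer G n - group_center G - {n}) = card (centralizer G n) - c - 1"
    using n finite_centralizer by (simp add: card_Diff_singleton centralizer_def)
  moreover have "card (centralizer G n) \<le> h"
    using card_centralizer_bounds(2)[OF n] by (simp add: h_def)
  ultimately show ?thesis
    using finite_centralizer by (simp add: card_cartesian_product card_Pow mult_le_mono power_increasing)
qed

lemma card_class_invariant_image_le:
  defines "c \<equiv> card (group_center G)" and "h \<equiv> card (carrier G) div 2"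
  shows "card (class_invariant G ` seqs G)
    \<le> card (carrier G) + c + card (carrier G - group_center G) * (2 ^ (h - c - 1) * h)"
proof -
  define Z where "Z = group_center G"
  define P where "P n = Pow (centralizer G n - Z - {n}) \<times> centralizer G n" for n
  define D1 where "D1 = (\<lambda>x. (None :: 'a set option, {x, eps \<otimes> x})) ` carrier G"
  define D2 where "D2 = (\<lambda>z. (Some ({} :: 'a set), {z})) ` Z"
  define D3 where "D3 = (\<Union>n \<in> carrier G - Z. (\<lambda>(B, x). (Some (insert n B), {x})) ` P n)"
  have fin_D: "finite D1" "finite D2" "finite D3"
    unfolding D1_def D2_def D3_def P_def Z_def
    using finite_carrier finite_group_center finite_centralizer by auto
  have "class_invariant G ` seqs G \<subseteq> D1 \<union> D2 \<union> D3"
  proof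
    fix d assume "d \<in> class_invariant G ` seqs G"
    then obtain S where S: "S \<in> seqs G" and d: "d = class_invariant G S"
      by blast
    from S show "d \<in> D1 \<union> D2 \<union> D3"
    proof (cases rule: class_invariant_cases)
      case (noncentral n B x)
      then have "(B, x) \<in> P n"
        by (simp add: P_def Z_def)
      then show ?thesis
        using noncentral by (auto simp: d D3_def Z_def intro!: bexI[of _ n] image_eqI[of _ _ "(B, x)"])
    qed (auto simp: d D1_def D2_def Z_def)
  qed
  then have "card (class_invariant G ` seqs G) \<le> card (D1 \<union> D2 \<union> D3)"
    using fin_D by (intro card_mono) simp_all
  also have "\<dots> \<le> card D1 + card D2 + card D3"
    by (meson add_le_mono card_Un_le le_refl order_trans)
  also have "\<dots> \<le> card (carrier G) + c + card (carrier G - Z) * (2 ^ (h - c - 1) * h)"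
  proof -
    have D1: "card D1 \<le> card (carrier G)"
      unfolding D1_def by (rule card_image_le[OF finite_carrier])
    have D2: "card D2 \<le> c"
      unfolding D2_def c_def Z_def by (rule card_image_le[OF finite_group_center])
    have card_P: "card (P n) \<le> 2 ^ (h - c - 1) * h" if "n \<in> carrier G - Z" for n
      using card_centralizer_pairs_le[of n] that by (simp add: P_def Z_def c_def h_def)
    have "card D3 \<le> (\<Sum>n \<in> carrier G - Z. card ((\<lambda>(B, x). (Some (insert n B), {x})) ` P n))"
      unfolding D3_def using finite_carrier by (intro card_UN_le) simp
    also have "\<dots> \<le> (\<Sum>n \<in> carrier G - Z. 2 ^ (h - c - 1) * h)"
      using card_P finite_centralizer by (intro sum_mono order_trans[OF card_image_le]) (auto simp: P_def)
    finally have "card D3 \<le> card (carrier G - Z) * (2 ^ (h - c - 1) * h)"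
      by simp
    with D1 D2 show ?thesis
      by linarith
  qed
  finally show ?thesis
    by (simp add: Z_def)
qed

lemma card_class_semigroup_le:
  "card (class_semigroup G) \<le> card (group_center G) + (\<Prod>g \<in> carrier G - group_center G. ord g)"
proof -
  define c where "c = card (group_center G)"
  define h where "h = card (carrier G) div 2"
  define m where "m = card (carrier G - group_center G)"
  have "card (class_semigroup G) \<le> card (class_invariant G ` seqs G)"
    unfolding class_semigroup_def
    using finite_class_invariant_image seq_class_eq_if_class_invariant_eq
    by (rule card_image_le_if_factors)
  also have "\<dots> \<le> card (carrier G) + c + m * (2 ^ (h - c - 1) * h)"
    using card_class_invariant_image_le by (simp add: c_def h_def m_def)
  also have "\<dots> \<le> c + 2 ^ m"
  proof -
    obtain a where a: "a \<in> carrier G - group_center G"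
      using center_neq_carrier subgroup.subset[OF subgroup_group_center] by blast
    then have "c + 2 \<le> h"
      using card_centralizer_bounds[OF a] by (simp add: c_def h_def)
    moreover have card: "card (carrier G) = m + c"
      using subgroup.subset[OF subgroup_group_center] finite_group_center
      by (simp add: m_def c_def card_Diff_subset card_mono[OF finite_carrier])
    moreover have "2 * h \<le> card (carrier G)"
      by (simp add: h_def)
    moreover have "2 \<le> c"
      using two_le_card_center by (simp add: c_def)
    ultimately have "m + h + m * 2 ^ (h - c - 1) * h \<le> 2 ^ m"
      by (intro two_pow_bound) linarith+
    then show ?thesis
      using card \<open>c + 2 \<le> h\<close> by (simp add: mult.assoc)
  qed
  also have "\<dots> \<le> c + (\<Prod>g \<in> carrier G - group_center G. ord g)"
    using two_pow_card_le_prod_ord[OF finite_carrier, of "carrier G - group_center G"]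
      subgroup.one_closed[OF subgroup_group_center]
    by (auto simp: m_def)
  finally show ?thesis
    by (simp add: c_def)
qed

end

lemma derived_order_two_if_card_derived:
  assumes "group G" "finite (carrier G)" "card (derived G (carrier G)) = 2"
  obtains eps where "derived_order_two G eps"
proof -
  interpret group G
    by fact
  have one: "\<one>\<^bsub>G\<^esub> \<in> derived G (carrier G)"
    using subgroup.one_closed[OF derived_is_subgroup[OF subset_refl]] .
  obtain u v where uv: "derived G (carrier G) = {u, v}" "u \<noteq> v"
    using assms(3) unfolding card_2_iff by blast
  obtain eps where "derived G (carrier G) = {\<one>\<^bsub>G\<^esub>, eps}" "eps \<noteq> \<one>\<^bsub>G\<^esub>"
  proof (cases "u = \<one>\<^bsub>G\<^esub>")
    case True
    then show thesis
      using that[of v] uv by simp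
  next
    case False
    then have "v = \<one>\<^bsub>G\<^esub>"
      using one uv(1) by auto
    then show thesis
      using that[of u] uv by (simp add: insert_commute)
  qed
  with assms(1,2) have "derived_order_two G eps"
    by (simp add: derived_order_two_def derived_order_two_axioms_def)
  then show thesis
    by (rule that)
qed

theorem theorem3p10:
  fixes G :: "('a, 'b) monoid_scheme"
  assumes "group G" and "finite (carrier G)"
    and "card (derived G (carrier G)) = 2"
  shows "seminormal (prod_one_seqs G)
    \<and> clifford_semigroup (class_semigroup G) (class_add G)
    \<and> (\<forall>S g. S \<in> seqs G \<and> seq_prods G S = {g} \<longrightarrow>
           (let n = group.ord G g;
                K = (\<lambda>k. seq_class G (repeat_mset k S)) ` {1..n};
                KG = \<lparr>carrier = K, monoid.mult = class_add G, one = seq_class G (repeat_mset n S)\<rparr>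
            in semigroup_subgroup (class_semigroup G) (class_add G) K
               \<and> group KG \<and> card K = n
               \<and> (\<forall>x \<in> K. \<exists>k::nat. x = seq_class G S [^]\<^bsub>KG\<^esub> k)))
    \<and> card (class_semigroup G)
           \<le> card (group_center G) + (\<Prod>g \<in> carrier G - group_center G. group.ord G g)"
proof -
  obtain eps where "derived_order_two G eps"
    using derived_order_two_if_card_derived assms by blast
  then interpret derived_order_two G eps .
  show ?thesis
    using seminormal_prod_one_seqs clifford_class_semigroup repeat_classes_cyclic_subgroup card_class_semigroup_le
    by (simp add: Let_def)
qed

end
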